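(* If $G$ is a connected indecomposable graph on $[n]$ with $\operatorname{pv}(G)>0$, then $\operatorname{pv}(G)-\alpha(G)>0$.
   Context: A pendant vertex is a vertex of degree one; $\operatorname{pv}(G)$ is the number of pendant vertices of $G$. For $v\in V(G)$, $\operatorname{cdeg}_G(v)$ is the number of maximal cliques of $G$ containing $v$ and $\operatorname{pdeg}_G(v)$ is the number of pendant vertices adjacent to $v$. A vertex $v$ with $\operatorname{pdeg}_G(v)\ge1$ is of type 1 if $\operatorname{cdeg}_G(v)=\operatorname{pdeg}_G(v)+1$ (and of type 2 if $\operatorname{cdeg}_G(v)\ge\operatorname{pdeg}_G(v)+2$); $\alpha(G)$ is the number of type 1 vertices. A vertex is free if it belongs to exactly one maximal clique. $G$ is decomposable if $G=G_1\cup G_2$ with $V(G_1)\cap V(G_2)=\{v\}$, $v$ free in both $G_1$ and $G_2$; otherwise indecomposable. *)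

theory Defs
  imports Main
begin

definition sgraph :: "'a set \<Rightarrow> 'a set set \<Rightarrow> bool" where
  "sgraph V E \<longleftrightarrow> finite V \<and> (\<forall>e\<in>E. e \<subseteq> V \<and> card e = 2)"

definition adj_rel :: "'a set set \<Rightarrow> ('a \<times> 'a) set" where
  "adj_rel E = {(x, y). {x, y} \<in> E}"

definition gconnected :: "'a set \<Rightarrow> 'a set set \<Rightarrow> bool" where
  "gconnected V E \<longleftrightarrow> (\<forall>x\<in>V. \<forall>y\<in>V. (x, y) \<in> (adj_rel E)\<^sup>*)"

definition is_clique :: "'a set \<Rightarrow> 'a set set \<Rightarrow> 'a set \<Rightarrow> bool" where
  "is_clique V E C \<longleftrightarrow> C \<subseteq> V \<and> (\<forall>x\<in>C. \<forall>y\<in>C. x \<noteq> y \<longrightarrow> {x, y} \<in> E)"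

definition max_clique :: "'a set \<Rightarrow> 'a set set \<Rightarrow> 'a set \<Rightarrow> bool" where
  "max_clique V E C \<longleftrightarrow> is_clique V E C \<and> (\<forall>D. is_clique V E D \<and> C \<subseteq> D \<longrightarrow> D = C)"

definition cdeg :: "'a set \<Rightarrow> 'a set set \<Rightarrow> 'a \<Rightarrow> nat" where
  "cdeg V E v = card {C. max_clique V E C \<and> v \<in> C}"

definition gdeg :: "'a set \<Rightarrow> 'a set set \<Rightarrow> 'a \<Rightarrow> nat" where
  "gdeg V E v = card {u\<in>V. {u, v} \<in> E}"

definition pendant :: "'a set \<Rightarrow> 'a set set \<Rightarrow> 'a \<Rightarrow> bool" where
  "pendant V E v \<longleftrightarrow> v \<in> V \<and> gdeg V E v = 1"

definition pv :: "'a set \<Rightarrow> 'a set set \<Rightarrow> nat" where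
  "pv V E = card {v\<in>V. pendant V E v}"

definition pdeg :: "'a set \<Rightarrow> 'a set set \<Rightarrow> 'a \<Rightarrow> nat" where
  "pdeg V E v = card {u\<in>V. {u, v} \<in> E \<and> pendant V E u}"

definition type1 :: "'a set \<Rightarrow> 'a set set \<Rightarrow> 'a \<Rightarrow> bool" where
  "type1 V E v \<longleftrightarrow> pdeg V E v \<ge> 1 \<and> cdeg V E v = pdeg V E v + 1"

definition alpha :: "'a set \<Rightarrow> 'a set set \<Rightarrow> nat" where
  "alpha V E = card {v\<in>V. type1 V E v}"

definition free_vertex :: "'a set \<Rightarrow> 'a set set \<Rightarrow> 'a \<Rightarrow> bool" where
  "free_vertex V E v \<longleftrightarrow> v \<in> V \<and> cdeg V E v = 1"

(* G = G1 \<union> G2 with V(G1) \<inter> V(G2) = {v}, v free in both; both parts are proper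
   (have a vertex other than v), otherwise every graph with a free vertex would be
   trivially decomposable. *)
definition decomposable :: "'a set \<Rightarrow> 'a set set \<Rightarrow> bool" where
  "decomposable V E \<longleftrightarrow> (\<exists>V1 E1 V2 E2 v.
      sgraph V1 E1 \<and> sgraph V2 E2 \<and> V = V1 \<union> V2 \<and> E = E1 \<union> E2 \<and>
      V1 \<inter> V2 = {v} \<and> V1 \<noteq> {v} \<and> V2 \<noteq> {v} \<and>
      free_vertex V1 E1 v \<and> free_vertex V2 E2 v)"

end

theory Submission
  imports Defs
begin

text \<open>
  Each type 1 vertex is adjacent to a pendant vertex, so sending every pendant vertex to its
  unique neighbour covers all type 1 vertices and \<open>pv(G) \<ge> \<alpha>(G)\<close>. If equality held, this map
  would be a bijection onto the type 1 vertices; then some vertex \<open>v\<close> has a single pendant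
  neighbour \<open>p\<close> and lies in exactly two maximal cliques, \<open>{v, p}\<close> and one more. Splitting off the
  edge \<open>vp\<close> decomposes \<open>G\<close> at \<open>v\<close>, since \<open>v\<close> is free both in that edge and in \<open>G - p\<close>.
\<close>

definition pendants :: "'a set \<Rightarrow> 'a set set \<Rightarrow> 'a set" where
  "pendants V E = {x\<in>V. pendant V E x}"

definition pendant_neighbour :: "'a set \<Rightarrow> 'a set set \<Rightarrow> 'a \<Rightarrow> 'a" where
  "pendant_neighbour V E p = (THE w. w \<in> V \<and> {w, p} \<in> E)"

lemma pendant_neighbourE:
  assumes "pendant V E p"
  obtains w where "w \<in> V" "{w, p} \<in> E" "\<And>x. x \<in> V \<Longrightarrow> {x, p} \<in> E \<Longrightarrow> x = w"
proof -
  from assms have "card {u\<in>V. {u, p} \<in> E} = 1" by (simp add: pendant_def gdeg_def)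
  then obtain w where "{u\<in>V. {u, p} \<in> E} = {w}" by (auto simp: card_1_singleton_iff)
  then show ?thesis using that by blast
qed

lemma pendant_neighbour:
  assumes "pendant V E p"
  shows "pendant_neighbour V E p \<in> V" "{pendant_neighbour V E p, p} \<in> E"
    and "\<And>x. x \<in> V \<Longrightarrow> {x, p} \<in> E \<Longrightarrow> x = pendant_neighbour V E p"
proof -
  obtain w where w: "w \<in> V" "{w, p} \<in> E" "\<And>x. x \<in> V \<Longrightarrow> {x, p} \<in> E \<Longrightarrow> x = w"
    using pendant_neighbourE[OF assms] by blast
  then have eq: "pendant_neighbour V E p = w"
    unfolding pendant_neighbour_def by (blast intro: the_equality)
  show "pendant_neighbour V E p \<in> V" "{pendant_neighbour V E p, p} \<in> E"
    using w(1,2) by (simp_all add: eq)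
  show "\<And>x. x \<in> V \<Longrightarrow> {x, p} \<in> E \<Longrightarrow> x = pendant_neighbour V E p"
    using w(3) by (simp add: eq)
qed

lemma adjacent_pendants_eq_fibre:
  assumes "v \<in> V"
  shows "{u\<in>V. {u, v} \<in> E \<and> pendant V E u} = {u\<in>pendants V E. pendant_neighbour V E u = v}"
proof -
  have "{u, v} \<in> E \<longleftrightarrow> pendant_neighbour V E u = v" if "pendant V E u" for u
    using assms pendant_neighbour[OF that] by (metis insert_commute)
  then show ?thesis by (auto simp: pendants_def)
qed

lemma type1_subset_image_pendant_neighbour:
  "{v\<in>V. type1 V E v} \<subseteq> pendant_neighbour V E ` pendants V E"
proof
  fix v assume v: "v \<in> {v\<in>V. type1 V E v}"
  then have "pdeg V E v = card {u\<in>pendants V E. pendant_neighbour V E u = v}"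
    by (simp add: pdeg_def adjacent_pendants_eq_fibre)
  with v have "card {u\<in>pendants V E. pendant_neighbour V E u = v} \<noteq> 0"
    by (simp add: type1_def)
  then obtain u where "u \<in> pendants V E" "pendant_neighbour V E u = v"
    by (metis (mono_tags, lifting) card.empty empty_Collect_eq)
  then show "v \<in> pendant_neighbour V E ` pendants V E" by blast
qed

lemma pendant_edge_with_cdeg_2_if_pv_le_alpha:
  assumes "finite V" and "pv V E > 0" and "pv V E \<le> alpha V E"
  obtains v p where "pendant V E p" "{v, p} \<in> E" "cdeg V E v = 2"
proof -
  let ?P = "pendants V E" and ?T = "{v\<in>V. type1 V E v}" and ?f = "pendant_neighbour V E"
  have fin: "finite ?P" using assms(1) by (simp add: pendants_def)
  have T_sub: "?T \<subseteq> ?f ` ?P" by (rule type1_subset_image_pendant_neighbour)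
  have "card ?P \<le> card ?T" using assms(3) by (simp add: pv_def alpha_def pendants_def)
  moreover have "card ?T \<le> card (?f ` ?P)" using T_sub fin by (simp add: card_mono)
  moreover have "card (?f ` ?P) \<le> card ?P" using fin by (rule card_image_le)
  ultimately have "card (?f ` ?P) = card ?P" "card ?T = card (?f ` ?P)" by linarith+
  then have inj: "inj_on ?f ?P" and T_eq: "?T = ?f ` ?P"
    using eq_card_imp_inj_on fin card_subset_eq T_sub by blast+
  have "?P \<noteq> {}" using assms(2) unfolding pv_def pendants_def by (metis card.empty less_irrefl)
  then obtain p where p: "p \<in> ?P" by blast
  let ?v = "?f p"
  have pend: "pendant V E p" using p by (simp add: pendants_def)
  have vT: "?v \<in> ?T" using T_eq p by blast
  have "{u\<in>?P. ?f u = ?v} = {p}" using inj p by (auto simp: inj_on_def)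
  then have "pdeg V E ?v = 1"
    using vT by (simp add: pdeg_def adjacent_pendants_eq_fibre)
  then have "cdeg V E ?v = 2" using vT by (simp add: type1_def)
  with pend pendant_neighbour(2)[OF pend] show ?thesis using that by blast
qed

lemma free_vertex_edge_graph:
  assumes "x \<noteq> y"
  shows "free_vertex {x, y} {{x, y}} x"
proof -
  have clique: "is_clique {x, y} {{x, y}} {x, y}" by (auto simp: is_clique_def insert_commute)
  have "max_clique {x, y} {{x, y}} D \<longleftrightarrow> D = {x, y}" for D
  proof
    assume "max_clique {x, y} {{x, y}} D"
    then show "D = {x, y}" using clique by (metis max_clique_def is_clique_def)
  next
    assume "D = {x, y}"
    then show "max_clique {x, y} {{x, y}} D"
      using clique unfolding max_clique_def by (metis is_clique_def subset_antisym)
  qed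
  then have "{D. max_clique {x, y} {{x, y}} D \<and> x \<in> D} = {{x, y}}" by auto
  then show ?thesis by (simp add: free_vertex_def cdeg_def)
qed

locale pendant_edge =
  fixes V :: "'a set" and E :: "'a set set" and v p :: 'a
  assumes sgraph: "sgraph V E" and pendant: "pendant V E p" and edge: "{v, p} \<in> E"
begin

abbreviation "V' \<equiv> V - {p}"
abbreviation "E' \<equiv> E - {{v, p}}"

lemma edge_ends: "v \<in> V" "p \<in> V" "v \<noteq> p"
  using sgraph edge by (auto simp: sgraph_def card_2_iff)

lemma neighbour_of_pendant: "{x, p} \<in> E \<Longrightarrow> x = v"
  using sgraph pendant_neighbour(3)[OF pendant] edge edge_ends(1) by (metis insert_subset sgraph_def)

lemma clique_through_pendant:
  assumes "is_clique V E D" "p \<in> D"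
  shows "D \<subseteq> {v, p}"
  using assms neighbour_of_pendant by (fastforce simp: is_clique_def)

lemma max_clique_edge: "max_clique V E {v, p}"
  using edge_ends edge clique_through_pendant
  by (auto simp: max_clique_def is_clique_def insert_commute)

lemma max_clique_through_pendant:
  assumes "max_clique V E D" "p \<in> D"
  shows "D = {v, p}"
  using assms clique_through_pendant max_clique_edge unfolding max_clique_def by blast

lemma sgraph_delete: "sgraph V' E'"
proof -
  have "p \<notin> e" if "e \<in> E'" for e
  proof
    assume "p \<in> e"
    have "e \<in> E" "e \<noteq> {v, p}" using \<open>e \<in> E'\<close> by auto
    then obtain x y where "e = {x, y}" using sgraph by (metis card_2_iff sgraph_def)
    with \<open>p \<in> e\<close> obtain q where "e = {q, p}" by (metis insertE insert_commute singletonD)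
    with \<open>e \<in> E\<close> \<open>e \<noteq> {v, p}\<close> neighbour_of_pendant show False by blast
  qed
  then show ?thesis using sgraph by (auto simp: sgraph_def)
qed

lemma is_clique_delete_iff: "is_clique V' E' D \<longleftrightarrow> is_clique V E D \<and> p \<notin> D"
  by (auto simp: is_clique_def doubleton_eq_iff)

lemma max_clique_delete_iff:
  assumes "v \<in> D" "D \<noteq> {v}"
  shows "max_clique V' E' D \<longleftrightarrow> max_clique V E D \<and> p \<notin> D"
proof
  assume max': "max_clique V' E' D"
  then have D: "is_clique V E D" "p \<notin> D" by (auto simp: max_clique_def is_clique_delete_iff)
  have "D' = D" if "is_clique V E D'" "D \<subseteq> D'" for D'
  proof (cases "p \<in> D'")
    case True
    with that clique_through_pendant assms D(2) show ?thesis by blast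
  next
    case False
    with that max' show ?thesis by (auto simp: max_clique_def is_clique_delete_iff)
  qed
  with D show "max_clique V E D \<and> p \<notin> D" by (simp add: max_clique_def)
qed (auto simp: max_clique_def is_clique_delete_iff)

lemma other_max_clique:
  assumes "cdeg V E v \<ge> 2"
  obtains C u where "max_clique V E C" "v \<in> C" "p \<notin> C" "u \<in> C" "u \<noteq> v"
proof -
  have "{C. max_clique V E C \<and> v \<in> C} \<noteq> {{v, p}}"
  proof
    assume "{C. max_clique V E C \<and> v \<in> C} = {{v, p}}"
    then have "cdeg V E v = 1" by (simp add: cdeg_def)
    with assms show False by simp
  qed
  then obtain C where C: "max_clique V E C" "v \<in> C" "C \<noteq> {v, p}"
    using max_clique_edge by blast
  have "p \<notin> C" using C max_clique_through_pendant by blast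
  moreover have "C \<noteq> {v}" using C max_clique_edge unfolding max_clique_def by blast
  ultimately show ?thesis using C that by blast
qed

lemma cdeg_delete:
  assumes "cdeg V E v \<ge> 2"
  shows "cdeg V' E' v = cdeg V E v - 1"
proof -
  obtain C u where C: "max_clique V E C" "v \<in> C" "p \<notin> C" "u \<in> C" "u \<noteq> v"
    using other_max_clique assms by blast
  \<comment> \<open>Only \<open>{v, p}\<close> is lost: the other maximal clique through \<open>v\<close> keeps \<open>{v}\<close> from
      becoming maximal in \<open>G - p\<close>.\<close>
  have "\<not> max_clique V' E' {v}"
  proof
    assume "max_clique V' E' {v}"
    moreover have "is_clique V' E' C" using C by (simp add: max_clique_def is_clique_delete_iff)
    ultimately show False using C(2,4,5) unfolding max_clique_def by blast
  qed
  have "max_clique V' E' D \<longleftrightarrow> max_clique V E D \<and> D \<noteq> {v, p}" if "v \<in> D" for D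
  proof (cases "D = {v}")
    case True
    have "\<not> max_clique V E {v}" using max_clique_edge edge_ends unfolding max_clique_def by blast
    with True \<open>\<not> max_clique V' E' {v}\<close> show ?thesis by simp
  next
    case False
    with that max_clique_delete_iff max_clique_through_pendant show ?thesis by blast
  qed
  then have "{D. max_clique V' E' D \<and> v \<in> D} = {D. max_clique V E D \<and> v \<in> D} - {{v, p}}"
    by blast
  moreover have "finite {D. max_clique V E D \<and> v \<in> D}"
    using assms by (intro card_ge_0_finite) (simp add: cdeg_def)
  ultimately show ?thesis using max_clique_edge by (simp add: cdeg_def)
qed

lemma decomposable:
  assumes "cdeg V E v = 2"
  shows "decomposable V E"
proof -
  obtain C u where C: "max_clique V E C" "v \<in> C" "p \<notin> C" "u \<in> C" "u \<noteq> v"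
    using other_max_clique assms by auto
  have "u \<in> V'" using C by (auto simp: max_clique_def is_clique_def)
  then have "V' \<noteq> {v}" using C by auto
  moreover have "free_vertex V' E' v" using cdeg_delete assms edge_ends by (simp add: free_vertex_def)
  moreover have "free_vertex {v, p} {{v, p}} v" using edge_ends by (simp add: free_vertex_edge_graph)
  moreover have "sgraph {v, p} {{v, p}}" using edge_ends by (simp add: sgraph_def)
  moreover have "V = {v, p} \<union> V'" "E = {{v, p}} \<union> E'" "{v, p} \<inter> V' = {v}" "{v, p} \<noteq> {v}"
    using edge_ends edge by auto
  ultimately show ?thesis unfolding decomposable_def using sgraph_delete by blast
qed

end

theorem lemma4p3:
  fixes n :: nat and E :: "nat set set"
  assumes "sgraph {1..n} E"
    and "gconnected {1..n} E"
    and "\<not> decomposable {1..n} E"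
    and "pv {1..n} E > 0"
  shows "int (pv {1..n} E) - int (alpha {1..n} E) > 0"
proof (rule ccontr)
  assume "\<not> ?thesis"
  then have "pv {1..n} E \<le> alpha {1..n} E" by simp
  then obtain v p where "pendant {1..n} E p" "{v, p} \<in> E" "cdeg {1..n} E v = 2"
    using pendant_edge_with_cdeg_2_if_pv_le_alpha assms(4) by blast
  then have "decomposable {1..n} E"
    using pendant_edge.decomposable pendant_edge.intro assms(1) by metis
  with assms(3) show False by contradiction
qed

end
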